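(* Let $n\geq 2$ be an integer and $\zeta\in\mathbb{R}$. For $(x,y_{1},\ldots,y_{n})\in\mathbb{R}^{n+1}$ write $P(\zeta)=x+\zeta y_{1}+\cdots+\zeta^{n}y_{n}$ and $P^{\prime}(\zeta)=y_{1}+2\zeta y_{2}+\cdots+n\zeta^{n-1}y_{n}$. For $Q>1$ let \[ K^{+}(Q)=\{(x,y_{1},\ldots,y_{n})\in\mathbb{R}^{n+1}: \vert y_{t}\vert\leq Q^{1/n}\ (1\leq t\leq n),\ \vert P(\zeta)\vert\leq Q^{-1}\}, \] and for $c>0$ let $\mathscr{K}_{c}(Q)=K^{+}(Q)\cap\{(x,y_{1},\ldots,y_{n}): \vert P^{\prime}(\zeta)\vert\leq cQ^{1/n}\}$. For each $Q>1$ let $c(Q)>0$ be the (unique) number with \[ \mathrm{vol}(\mathscr{K}_{c(Q)}(Q))=\frac{1}{2(n+1)!}\mathrm{vol}(K^{+}(Q))=\frac{2^{n+1}}{2(n+1)!}. \] Then there is a constant $B>0$, independent of $Q$, such that $c(Q)\geq B$ for all $Q>1$; in particular $\liminf_{Q\to\infty}\log_{Q}c(Q)\geq 0$.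
   Context: $\mathrm{vol}$ denotes $(n+1)$-dimensional Lebesgue measure. *)

theory Defs
  imports "HOL-Analysis.Analysis"
begin

text \<open>Points of R^(n+1) are functions p :: nat => real on {0..n}, with
  p 0 = x and p t = y_t (1 <= t <= n); Lebesgue measure on R^(n+1) is the
  (n+1)-fold product of Lebesgue-Borel measure.\<close>

definition volR :: "nat \<Rightarrow> (nat \<Rightarrow> real) set \<Rightarrow> real" where
  "volR n S = measure (Pi\<^sub>M {..n} (\<lambda>_. lborel)) S"

definition Pval :: "nat \<Rightarrow> real \<Rightarrow> (nat \<Rightarrow> real) \<Rightarrow> real" where
  "Pval n \<zeta> p = p 0 + (\<Sum>t=1..n. \<zeta> ^ t * p t)"

definition Pder :: "nat \<Rightarrow> real \<Rightarrow> (nat \<Rightarrow> real) \<Rightarrow> real" where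
  "Pder n \<zeta> p = (\<Sum>t=1..n. real t * \<zeta> ^ (t - 1) * p t)"

definition Kplus :: "nat \<Rightarrow> real \<Rightarrow> real \<Rightarrow> (nat \<Rightarrow> real) set" where
  "Kplus n \<zeta> Q = {p \<in> PiE {..n} (\<lambda>_. UNIV).
      (\<forall>t\<in>{1..n}. \<bar>p t\<bar> \<le> Q powr (1 / real n)) \<and> \<bar>Pval n \<zeta> p\<bar> \<le> 1 / Q}"

definition Kc :: "nat \<Rightarrow> real \<Rightarrow> real \<Rightarrow> real \<Rightarrow> (nat \<Rightarrow> real) set" where
  "Kc n \<zeta> c Q = Kplus n \<zeta> Q \<inter> {p. \<bar>Pder n \<zeta> p\<bar> \<le> c * Q powr (1 / real n)}"

end

theory Submission imports Defs "HOL-Real_Asymp.Real_Asymp" begin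

text \<open>With \<open>R = Q powr (1/n)\<close>, over each point \<open>(y\<^sub>1, \<dots>, y\<^sub>n)\<close> of the cube \<open>[-R, R]\<^sup>n\<close>
  the condition \<open>\<bar>P(\<zeta>)\<bar> \<le> 1/Q\<close> cuts out an \<open>x\<close>-interval of length \<open>2/Q\<close>, so
  \<open>vol K\<^sup>+(Q) = 2\<^sup>n\<^sup>+\<^sup>1\<close>. Since \<open>P'(\<zeta>)\<close> is \<open>y\<^sub>1\<close> plus terms in \<open>y\<^sub>2, \<dots>, y\<^sub>n\<close>, fixing these the
  condition \<open>\<bar>P'(\<zeta>)\<bar> \<le> c R\<close> confines \<open>y\<^sub>1\<close> to an interval of length \<open>2 c R\<close>, whence
  \<open>vol K\<^sub>c(Q) \<le> 2\<^sup>n\<^sup>+\<^sup>1 c\<close>. The normalisation of \<open>c(Q)\<close> therefore forces \<open>c(Q) \<ge> 1/(2 (n+1)!)\<close>.\<close>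

abbreviation lborel_Pi :: "nat set \<Rightarrow> (nat \<Rightarrow> real) measure" where
  "lborel_Pi I \<equiv> Pi\<^sub>M I (\<lambda>_. lborel)"

lemma product_sigma_finite_lborel: "product_sigma_finite (\<lambda>_::nat. (lborel :: real measure))"
  by standard

lemma emeasure_PiM_insert_fibres:
  assumes "finite I" "i \<notin> I" "S \<in> sets (lborel_Pi (insert i I))"
  shows "emeasure (lborel_Pi (insert i I)) S =
    (\<integral>\<^sup>+ y. emeasure lborel {x. y(i:=x) \<in> S} \<partial>lborel_Pi I)"
proof -
  have "emeasure (lborel_Pi (insert i I)) S = (\<integral>\<^sup>+ p. indicator S p \<partial>lborel_Pi (insert i I))"
    using assms(3) by simp
  also have "\<dots> = (\<integral>\<^sup>+ y. (\<integral>\<^sup>+ x. indicator S (y(i:=x)) \<partial>lborel) \<partial>lborel_Pi I)"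
    by (rule product_sigma_finite.product_nn_integral_insert[OF product_sigma_finite_lborel])
      (use assms in auto)
  also have "\<dots> = (\<integral>\<^sup>+ y. emeasure lborel {x. y(i:=x) \<in> S} \<partial>lborel_Pi I)"
  proof (rule nn_integral_cong)
    fix y assume y: "y \<in> space (lborel_Pi I)"
    have "(\<lambda>x. y(i:=x)) \<in> lborel \<rightarrow>\<^sub>M lborel_Pi (insert i I)"
      using measurable_component_update[OF y assms(2)] by simp
    moreover have "{x. y(i:=x) \<in> S} = (\<lambda>x. y(i:=x)) -` S \<inter> space lborel" by auto
    ultimately have "{x. y(i:=x) \<in> S} \<in> sets lborel"
      using measurable_sets[OF _ assms(3)] by metis
    have "(\<integral>\<^sup>+ x. indicator S (y(i:=x)) \<partial>lborel) = (\<integral>\<^sup>+ x. indicator {x. y(i:=x) \<in> S} x \<partial>lborel)"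
      by (rule nn_integral_cong) (simp add: indicator_def)
    also have "\<dots> = emeasure lborel {x. y(i:=x) \<in> S}"
      using \<open>{x. y(i:=x) \<in> S} \<in> sets lborel\<close> by simp
    finally show "(\<integral>\<^sup>+ x. indicator S (y(i:=x)) \<partial>lborel) = emeasure lborel {x. y(i:=x) \<in> S}" .
  qed
  finally show ?thesis .
qed

lemma emeasure_PiM_insert_eq_fibres:
  assumes "finite I" "i \<notin> I" "S \<in> sets (lborel_Pi (insert i I))" "A \<in> sets (lborel_Pi I)"
    and "\<And>y. y \<in> space (lborel_Pi I) \<Longrightarrow> emeasure lborel {x. y(i:=x) \<in> S} = L * indicator A y"
  shows "emeasure (lborel_Pi (insert i I)) S = L * emeasure (lborel_Pi I) A"
proof -
  have "emeasure (lborel_Pi (insert i I)) S = (\<integral>\<^sup>+ y. L * indicator A y \<partial>lborel_Pi I)"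
    unfolding emeasure_PiM_insert_fibres[OF assms(1-3)] by (rule nn_integral_cong) (rule assms(5))
  also have "\<dots> = L * emeasure (lborel_Pi I) A"
    using assms(4) by (rule nn_integral_cmult_indicator)
  finally show ?thesis .
qed

lemma emeasure_PiM_insert_le_fibres:
  assumes "finite I" "i \<notin> I" "S \<in> sets (lborel_Pi (insert i I))" "A \<in> sets (lborel_Pi I)"
    and "\<And>y. y \<in> space (lborel_Pi I) \<Longrightarrow> emeasure lborel {x. y(i:=x) \<in> S} \<le> L * indicator A y"
  shows "emeasure (lborel_Pi (insert i I)) S \<le> L * emeasure (lborel_Pi I) A"
proof -
  have "emeasure (lborel_Pi (insert i I)) S \<le> (\<integral>\<^sup>+ y. L * indicator A y \<partial>lborel_Pi I)"
    unfolding emeasure_PiM_insert_fibres[OF assms(1-3)] by (rule nn_integral_mono) (rule assms(5))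
  also have "\<dots> = L * emeasure (lborel_Pi I) A"
    using assms(4) by (rule nn_integral_cmult_indicator)
  finally show ?thesis .
qed

lemma emeasure_PiM_cube:
  assumes "finite I" "R \<ge> 0"
  shows "emeasure (lborel_Pi I) (PiE I (\<lambda>_. {-R..R})) = ennreal ((2 * R) ^ card I)"
proof -
  have "emeasure (lborel_Pi I) (PiE I (\<lambda>_. {-R..R})) = (\<Prod>i\<in>I. emeasure lborel {-R..R})"
    using product_sigma_finite.emeasure_PiM[OF product_sigma_finite_lborel assms(1)] by (simp add: assms)
  also have "\<dots> = ennreal ((2 * R) ^ card I)"
    using assms by (simp add: ennreal_power)
  finally show ?thesis .
qed

lemma cube_in_sets: "finite I \<Longrightarrow> PiE I (\<lambda>_. {-R..R}) \<in> sets (lborel_Pi I)"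
  by (rule sets_PiM_I_finite) auto

lemma mem_cube_iff:
  "y \<in> space (lborel_Pi I) \<Longrightarrow> y \<in> PiE I (\<lambda>_. {-R..R}) \<longleftrightarrow> (\<forall>t\<in>I. \<bar>y t\<bar> \<le> R)"
  by (auto simp: space_PiM PiE_iff abs_le_iff)

lemma emeasure_lborel_abs_add_le:
  "r \<ge> 0 \<Longrightarrow> emeasure lborel {x::real. \<bar>x + s\<bar> \<le> r} = ennreal (2 * r)"
proof -
  assume "r \<ge> 0"
  moreover have "{x::real. \<bar>x + s\<bar> \<le> r} = {-s-r..-s+r}" by (auto simp: abs_le_iff)
  ultimately show ?thesis by simp
qed

lemma powr_inverse_power:
  assumes "Q > 0" "n \<ge> 1"
  shows "(Q powr (1 / real n)) ^ n = Q"
  using assms by (simp add: powr_realpow[symmetric] powr_powr)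

lemma Pval_upd_0: "Pval n \<zeta> (y(0:=x)) = x + (\<Sum>t=1..n. \<zeta> ^ t * y t)"
  unfolding Pval_def by (intro arg_cong2[where f="(+)"] sum.cong) auto

lemma Pder_upd_0: "Pder n \<zeta> (y(0:=x)) = Pder n \<zeta> y"
  unfolding Pder_def by (intro sum.cong) auto

lemma Pder_upd_1:
  assumes "n \<ge> 1"
  shows "Pder n \<zeta> (z(1:=u)) = u + (\<Sum>t=2..n. real t * \<zeta> ^ (t - 1) * z t)"
proof -
  have "Pder n \<zeta> (z(1:=u)) = u + (\<Sum>t=Suc 1..n. real t * \<zeta> ^ (t - 1) * (z(1:=u)) t)"
    unfolding Pder_def using assms by (subst sum.atLeast_Suc_atMost) auto
  also have "(\<Sum>t=Suc 1..n. real t * \<zeta> ^ (t - 1) * (z(1:=u)) t) = (\<Sum>t=2..n. real t * \<zeta> ^ (t - 1) * z t)"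
    by (intro sum.cong) auto
  finally show ?thesis .
qed

lemma Kplus_measurable [measurable]: "Kplus n \<zeta> Q \<in> sets (lborel_Pi {..n})"
proof -
  have "Kplus n \<zeta> Q = {p \<in> space (lborel_Pi {..n}).
      (\<forall>t\<in>{1..n}. \<bar>p t\<bar> \<le> Q powr (1 / real n)) \<and> \<bar>Pval n \<zeta> p\<bar> \<le> 1 / Q}"
    by (simp add: Kplus_def space_PiM)
  also have "\<dots> \<in> sets (lborel_Pi {..n})"
    unfolding Pval_def by measurable
  finally show ?thesis .
qed

lemma Kc_measurable [measurable]: "Kc n \<zeta> c Q \<in> sets (lborel_Pi {..n})"
proof -
  have "Kc n \<zeta> c Q = Kplus n \<zeta> Q \<inter>
      {p \<in> space (lborel_Pi {..n}). \<bar>Pder n \<zeta> p\<bar> \<le> c * Q powr (1 / real n)}"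
    by (auto simp: Kc_def Kplus_def space_PiM)
  also have "\<dots> \<in> sets (lborel_Pi {..n})"
    unfolding Pder_def by measurable
  finally show ?thesis .
qed

lemma upd_0_mem_Kplus_iff:
  assumes "y \<in> space (lborel_Pi {1..n})"
  shows "y(0:=x) \<in> Kplus n \<zeta> Q \<longleftrightarrow>
    (\<forall>t\<in>{1..n}. \<bar>y t\<bar> \<le> Q powr (1 / real n)) \<and> \<bar>x + (\<Sum>t=1..n. \<zeta> ^ t * y t)\<bar> \<le> 1 / Q"
proof -
  have "y(0:=x) \<in> PiE {..n} (\<lambda>_. UNIV)"
    using assms by (auto simp: space_PiM PiE_def extensional_def)
  then show ?thesis by (simp add: Kplus_def Pval_upd_0)
qed

lemma emeasure_Pder_slab_le:
  assumes "n \<ge> 1" "R \<ge> 0" "r \<ge> 0"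
  shows "emeasure (lborel_Pi {1..n})
      {y \<in> space (lborel_Pi {1..n}). (\<forall>t\<in>{1..n}. \<bar>y t\<bar> \<le> R) \<and> \<bar>Pder n \<zeta> y\<bar> \<le> r}
    \<le> ennreal (2 * r * (2 * R) ^ (n - 1))"
    (is "emeasure _ ?A \<le> _")
proof -
  define C where "C = PiE {2..n} (\<lambda>_::nat. {-R..R})"
  have I: "{1..n} = insert 1 {2..n}" using assms(1) by auto
  have "?A \<in> sets (lborel_Pi (insert 1 {2..n}))" unfolding I[symmetric] Pder_def by measurable
  then have "emeasure (lborel_Pi (insert 1 {2..n})) ?A
      \<le> ennreal (2 * r) * emeasure (lborel_Pi {2..n}) C"
  proof (intro emeasure_PiM_insert_le_fibres)
    fix z assume z: "z \<in> space (lborel_Pi {2..n})"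
    define s where "s = (\<Sum>t=2..n. real t * \<zeta> ^ (t - 1) * z t)"
    show "emeasure lborel {u. z(1:=u) \<in> ?A} \<le> ennreal (2 * r) * indicator C z"
    proof (cases "\<forall>t\<in>{2..n}. \<bar>z t\<bar> \<le> R")
      case True
      have "{u. z(1:=u) \<in> ?A} \<subseteq> {u. \<bar>u + s\<bar> \<le> r}"
        using Pder_upd_1[OF assms(1)] by (auto simp: s_def)
      then have "emeasure lborel {u. z(1:=u) \<in> ?A} \<le> emeasure lborel {u. \<bar>u + s\<bar> \<le> r}"
        by (intro emeasure_mono) auto
      then show ?thesis using True z assms(3) by (simp add: C_def mem_cube_iff emeasure_lborel_abs_add_le)
    next
      case False
      then obtain t where t: "t \<in> {2..n}" "\<bar>z t\<bar> > R" by auto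
      have notin: "z(1:=u) \<notin> ?A" for u
      proof
        assume "z(1:=u) \<in> ?A"
        moreover have "t \<in> {1..n}" using t(1) by simp
        ultimately have "\<bar>(z(1:=u)) t\<bar> \<le> R" by blast
        then show False using t by simp
      qed
      then have "{u. z(1:=u) \<in> ?A} = {}"
        unfolding Collect_empty_eq by (intro allI notin)
      then show ?thesis by (simp only: emeasure_empty zero_le)
    qed
  qed (simp_all add: C_def cube_in_sets)
  then have "emeasure (lborel_Pi {1..n}) ?A
      \<le> ennreal (2 * r) * emeasure (lborel_Pi {2..n}) C"
    by (simp only: I)
  also have "\<dots> = ennreal (2 * r * (2 * R) ^ (n - 1))"
    using assms by (simp add: C_def emeasure_PiM_cube ennreal_mult)
  finally show ?thesis .
qed

lemma emeasure_Kplus: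
  assumes "n \<ge> 1" "Q > 1"
  shows "emeasure (lborel_Pi {..n}) (Kplus n \<zeta> Q) = ennreal (2 ^ (n + 1))"
proof -
  define R where "R = Q powr (1 / real n)"
  define C where "C = PiE {1..n} (\<lambda>_. {-R..R})"
  have I: "{..n} = insert 0 {1..n}" by auto
  have meas: "Kplus n \<zeta> Q \<in> sets (lborel_Pi (insert 0 {1..n}))"
    unfolding I[symmetric] by measurable
  have "emeasure (lborel_Pi (insert 0 {1..n})) (Kplus n \<zeta> Q)
      = ennreal (2 / Q) * emeasure (lborel_Pi {1..n}) C"
  proof (rule emeasure_PiM_insert_eq_fibres[OF _ _ meas])
    fix y assume y: "y \<in> space (lborel_Pi {1..n})"
    define s where "s = (\<Sum>t=1..n. \<zeta> ^ t * y t)"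
    show "emeasure lborel {x. y(0:=x) \<in> Kplus n \<zeta> Q} = ennreal (2 / Q) * indicator C y"
    proof (cases "y \<in> C")
      case True
      then have "{x. y(0:=x) \<in> Kplus n \<zeta> Q} = {x. \<bar>x + s\<bar> \<le> 1 / Q}"
        using y by (simp add: upd_0_mem_Kplus_iff C_def mem_cube_iff R_def s_def)
      then show ?thesis using True assms(2) by (simp add: emeasure_lborel_abs_add_le)
    next
      case False
      then have "{x. y(0:=x) \<in> Kplus n \<zeta> Q} = {}"
        using y by (simp add: upd_0_mem_Kplus_iff C_def mem_cube_iff R_def)
      then show ?thesis using False by simp
    qed
  qed (simp_all add: C_def cube_in_sets)
  also have "\<dots> = ennreal (2 / Q) * ennreal ((2 * R) ^ n)"
    by (simp add: C_def emeasure_PiM_cube R_def)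
  also have "\<dots> = ennreal (2 / Q * (2 * R) ^ n)"
    using assms by (intro ennreal_mult[symmetric]) (auto simp: R_def)
  also have "2 / Q * (2 * R) ^ n = 2 ^ (n + 1)"
    using assms by (simp add: R_def powr_inverse_power power_mult_distrib)
  finally show ?thesis by (simp only: I)
qed

lemma emeasure_Kc_le:
  assumes "n \<ge> 1" "Q > 1" "c \<ge> 0"
  shows "emeasure (lborel_Pi {..n}) (Kc n \<zeta> c Q) \<le> ennreal (2 ^ (n + 1) * c)"
proof -
  define R where "R = Q powr (1 / real n)"
  have R: "R \<ge> 0" "R ^ n = Q" using assms by (simp_all add: R_def powr_inverse_power)
  define A where "A = {y \<in> space (lborel_Pi {1..n}).
      (\<forall>t\<in>{1..n}. \<bar>y t\<bar> \<le> R) \<and> \<bar>Pder n \<zeta> y\<bar> \<le> c * R}"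
  have I: "{..n} = insert 0 {1..n}" by auto
  have meas: "Kc n \<zeta> c Q \<in> sets (lborel_Pi (insert 0 {1..n}))"
    unfolding I[symmetric] by measurable
  have "emeasure (lborel_Pi (insert 0 {1..n})) (Kc n \<zeta> c Q)
      = ennreal (2 / Q) * emeasure (lborel_Pi {1..n}) A"
  proof (rule emeasure_PiM_insert_eq_fibres[OF _ _ meas])
    fix y assume y: "y \<in> space (lborel_Pi {1..n})"
    define s where "s = (\<Sum>t=1..n. \<zeta> ^ t * y t)"
    have mem: "y(0:=x) \<in> Kc n \<zeta> c Q \<longleftrightarrow> y \<in> A \<and> \<bar>x + s\<bar> \<le> 1 / Q" for x
      using y by (auto simp: Kc_def upd_0_mem_Kplus_iff Pder_upd_0 A_def R_def s_def)
    show "emeasure lborel {x. y(0:=x) \<in> Kc n \<zeta> c Q} = ennreal (2 / Q) * indicator A y"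
      using assms(2) by (cases "y \<in> A") (simp_all add: mem emeasure_lborel_abs_add_le)
  next
    show "A \<in> sets (lborel_Pi {1..n})" unfolding A_def Pder_def by measurable
  qed simp_all
  also have "\<dots> \<le> ennreal (2 / Q) * ennreal (2 * (c * R) * (2 * R) ^ (n - 1))"
    unfolding A_def using assms R by (intro mult_left_mono emeasure_Pder_slab_le) auto
  also have "\<dots> = ennreal (2 / Q * (2 * (c * R) * (2 * R) ^ (n - 1)))"
    using assms R by (intro ennreal_mult[symmetric]) auto
  also have "2 / Q * (2 * (c * R) * (2 * R) ^ (n - 1)) = 2 / Q * c * (2 * R) ^ n"
    using assms(1) by (cases n) auto
  also have "\<dots> = 2 ^ (n + 1) * c"
    using assms R by (simp add: power_mult_distrib)
  finally show ?thesis by (simp only: I)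
qed

lemma volR_Kplus: "n \<ge> 1 \<Longrightarrow> Q > 1 \<Longrightarrow> volR n (Kplus n \<zeta> Q) = 2 ^ (n + 1)"
  by (simp add: volR_def measure_def emeasure_Kplus)

lemma volR_Kc_le: "n \<ge> 1 \<Longrightarrow> Q > 1 \<Longrightarrow> c \<ge> 0 \<Longrightarrow> volR n (Kc n \<zeta> c Q) \<le> 2 ^ (n + 1) * c"
  unfolding volR_def measure_def by (intro enn2real_leI emeasure_Kc_le) auto

lemma Liminf_log_base_ge_0:
  fixes f :: "real \<Rightarrow> real"
  assumes "B > 0" and "\<And>Q. Q > 1 \<Longrightarrow> f Q \<ge> B"
  shows "Liminf at_top (\<lambda>Q. ereal (log Q (f Q))) \<ge> 0"
proof -
  have "((\<lambda>Q. ereal (log Q B)) \<longlongrightarrow> ereal 0) at_top"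
    by (intro tendsto_ereal) (unfold log_def, real_asymp)
  then have "Liminf at_top (\<lambda>Q. ereal (log Q B)) = 0"
    by (simp add: lim_imp_Liminf zero_ereal_def)
  moreover have "Liminf at_top (\<lambda>Q. ereal (log Q B)) \<le> Liminf at_top (\<lambda>Q. ereal (log Q (f Q)))"
    using eventually_gt_at_top[of 1]
    by (intro Liminf_mono, eventually_elim) (use assms in \<open>force simp: log_le_cancel_iff\<close>)
  ultimately show ?thesis by simp
qed

theorem corollary1:
  fixes n :: nat and \<zeta> :: real and c :: "real \<Rightarrow> real"
  assumes "n \<ge> 2"
    and "\<And>Q. Q > 1 \<Longrightarrow> c Q > 0"
    and "\<And>Q. Q > 1 \<Longrightarrow>
           volR n (Kc n \<zeta> (c Q) Q) = volR n (Kplus n \<zeta> Q) / (2 * fact (n + 1))"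
  shows "(\<exists>B>0. \<forall>Q>1. c Q \<ge> B) \<and>
         Liminf at_top (\<lambda>Q. ereal (log Q (c Q))) \<ge> 0"
proof -
  define B :: real where "B = 1 / (2 * fact (n + 1))"
  have n: "n \<ge> 1" using assms(1) by simp
  have "c Q \<ge> B" if Q: "Q > 1" for Q
  proof -
    have "2 ^ (n + 1) * B = volR n (Kplus n \<zeta> Q) / (2 * fact (n + 1))"
      using n Q by (simp add: volR_Kplus B_def)
    also have "\<dots> = volR n (Kc n \<zeta> (c Q) Q)"
      using assms(3)[OF Q] by simp
    also have "\<dots> \<le> 2 ^ (n + 1) * c Q"
      using n Q assms(2)[OF Q] by (intro volR_Kc_le) auto
    finally show ?thesis by simp
  qed
  moreover have "B > 0" unfolding B_def by simp
  ultimately show ?thesis using Liminf_log_base_ge_0 by blast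
qed

end
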